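(* Let $\mathcal{W}=(Q,\Sigma,\delta,q_\iota,\mathrm{Acc})$ be a binary-branching probabilistic parity word automaton, and for $q\in Q,a\in\Sigma$ write $\delta(q,a)=\{q_1,q_2\}$ for the two distinct states with $\delta(q,a,q_i)=\tfrac12$. Let $\mathcal{A}_\mathcal{W}=(Q,\Sigma,\delta_1,q_\iota,\mathrm{Acc})$ be the probabilistic tree automaton with $\delta_1(p,a,q,q)=\delta(p,a,q)$ and $\delta_1(p,a,q,q')=0$ for $q\neq q'$, and let $\mathcal{A}^{\mathrm{switch}}_\mathcal{W}=(Q,\Sigma,\delta_2,q_\iota,\mathrm{Acc})$ be the probabilistic tree automaton with $\delta_2(p,a,q_1,q_2)=\delta_2(p,a,q_2,q_1)=\tfrac12$ whenever $\delta(p,a)=\{q_1,q_2\}$, and $\delta_2(p,a,q,q')=0$ otherwise. Then $\mathcal{L}^{=1}_{\mathrm{qual}}(\mathcal{A}_\mathcal{W})=\mathcal{L}^{=1}_{\mathrm{qual}}(\mathcal{A}^{\mathrm{switch}}_\mathcal{W})$.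
   Context: Probabilistic word automaton: $(Q,\Sigma,\delta,q_\iota,\mathrm{Acc})$, $Q$ finite, $\Sigma$ finite, $\delta:Q\times\Sigma\times Q\to[0,1]$ with $\sum_p\delta(q,a,p)=1$. Binary branching: all transition probabilities lie in $\{0,\tfrac12\}$. Parity condition given by $\alpha:Q\to\{0,\dots,k\}$: a sequence $r\in Q^\omega$ is in $\mathrm{Acc}$ iff the minimum of $\alpha(q)$ over states occurring infinitely often in $r$ is even. Trees: a $\Sigma$-tree is a map $t:\{0,1\}^*\to\Sigma$; a branch is $\pi\in\{0,1\}^\omega$ and $t(\pi)=t(\epsilon)t(\pi_0)t(\pi_0\pi_1)\cdots$. The coin-flipping measure $\mu$ on $\{0,1\}^\omega$ gives the cone $u\{0,1\}^\omega$ measure $2^{-|u|}$. A probabilistic tree automaton is $(Q,\Sigma,\delta,q_\iota,\mathrm{Acc})$ with $\delta:Q\times\Sigma\times Q\times Q\to[0,1]$, $\sum_{q_0,q_1}\delta(q,a,q_0,q_1)=1$. A run on $t$ is a $Q$-tree $\rho$ with $\rho(\epsilon)=q_\iota$ and $\delta(\rho(u),t(u),\rho(u0),\rho(u1))>0$ for all $u$. A run is qualitatively accepting if $\mu(\{\pi:\rho(\pi)\in\mathrm{Acc}\})=1$. The measure $\mu_t$ on runs on $t$: the set of runs agreeing with a given partial run on all nodes of length $\le n$ has measure $\prod_{|u|<n}\delta(\rho(u),t(u),\rho(u0),\rho(u1))$ (children labels chosen independently at every node). $\mathcal{L}^{=1}_{\mathrm{qual}}(\mathcal{A})=\{t:\mu_t(\{\rho:\rho\text{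 qualitatively accepting}\})=1\}$. *)

theory Defs
  imports "HOL-Probability.Probability"
begin

text \<open>Trees are maps bool list => _ ; the empty list is the root, u @ [False] / u @ [True]
  are the children u0 / u1 of u.\<close>

definition parity_acc :: "('q::finite \<Rightarrow> nat) \<Rightarrow> (nat \<Rightarrow> 'q) \<Rightarrow> bool" where
  "parity_acc \<alpha> r \<longleftrightarrow> even (Min {\<alpha> q | q. \<exists>\<^sub>\<infinity> n. r n = q})"

definition binary_branching_word :: "('q::finite \<Rightarrow> 'a \<Rightarrow> 'q \<Rightarrow> real) \<Rightarrow> bool" where
  "binary_branching_word \<delta> \<longleftrightarrow>
     (\<forall>q a p. \<delta> q a p \<in> {0, 1/2}) \<and> (\<forall>q a. (\<Sum>p\<in>UNIV. \<delta> q a p) = 1)"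

definition along :: "(bool list \<Rightarrow> 'b) \<Rightarrow> (nat \<Rightarrow> bool) \<Rightarrow> nat \<Rightarrow> 'b" where
  "along t \<pi> n = t (map \<pi> [0..<n])"

definition coin :: "(nat \<Rightarrow> bool) measure" where
  "coin = PiM UNIV (\<lambda>_. measure_pmf (pmf_of_set (UNIV :: bool set)))"

definition is_run ::
  "('q \<Rightarrow> 'a \<Rightarrow> 'q \<Rightarrow> 'q \<Rightarrow> real) \<Rightarrow> 'q \<Rightarrow> (bool list \<Rightarrow> 'a) \<Rightarrow> (bool list \<Rightarrow> 'q) \<Rightarrow> bool" where
  "is_run \<delta> q0 t \<rho> \<longleftrightarrow> \<rho> [] = q0 \<and>
     (\<forall>u. \<delta> (\<rho> u) (t u) (\<rho> (u @ [False])) (\<rho> (u @ [True])) > 0)"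

definition qual_accepting :: "('q::finite \<Rightarrow> nat) \<Rightarrow> (bool list \<Rightarrow> 'q) \<Rightarrow> bool" where
  "qual_accepting \<alpha> \<rho> \<longleftrightarrow> emeasure coin {\<pi>. parity_acc \<alpha> (along \<rho> \<pi>)} = 1"

definition tree_space :: "(bool list \<Rightarrow> 'q) measure" where
  "tree_space = PiM UNIV (\<lambda>_. count_space UNIV)"

definition cyl :: "(bool list \<Rightarrow> 'q) \<Rightarrow> nat \<Rightarrow> (bool list \<Rightarrow> 'q) set" where
  "cyl \<rho> n = {\<rho>'. \<forall>u. length u \<le> n \<longrightarrow> \<rho>' u = \<rho> u}"

definition run_measure ::
  "('q::finite \<Rightarrow> 'a \<Rightarrow> 'q \<Rightarrow> 'q \<Rightarrow> real) \<Rightarrow> 'q \<Rightarrow> (bool list \<Rightarrow> 'a) \<Rightarrow> (bool list \<Rightarrow> 'q) measure" where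
  "run_measure \<delta> q0 t = (SOME M. prob_space M \<and> sets M = sets tree_space \<and>
     (\<forall>\<rho> n. emeasure M (cyl \<rho> n) =
        (if \<rho> [] = q0
         then ennreal (\<Prod>u\<in>{u. length u < n}. \<delta> (\<rho> u) (t u) (\<rho> (u @ [False])) (\<rho> (u @ [True])))
         else 0)))"

definition lang_qual ::
  "('q::finite \<Rightarrow> 'a \<Rightarrow> 'q \<Rightarrow> 'q \<Rightarrow> real) \<Rightarrow> 'q \<Rightarrow> ('q \<Rightarrow> nat) \<Rightarrow> (bool list \<Rightarrow> 'a) set" where
  "lang_qual \<delta> q0 \<alpha> = {t. emeasure (run_measure \<delta> q0 t)
       {\<rho>. is_run \<delta> q0 t \<rho> \<and> qual_accepting \<alpha> \<rho>} = 1}"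

definition delta1 :: "('q \<Rightarrow> 'a \<Rightarrow> 'q \<Rightarrow> real) \<Rightarrow> 'q \<Rightarrow> 'a \<Rightarrow> 'q \<Rightarrow> 'q \<Rightarrow> real" where
  "delta1 \<delta> p a q q' = (if q = q' then \<delta> p a q else 0)"

definition delta2 :: "('q \<Rightarrow> 'a \<Rightarrow> 'q \<Rightarrow> real) \<Rightarrow> 'q \<Rightarrow> 'a \<Rightarrow> 'q \<Rightarrow> 'q \<Rightarrow> real" where
  "delta2 \<delta> p a q q' =
     (if q \<noteq> q' \<and> \<delta> p a q = 1/2 \<and> \<delta> p a q' = 1/2 then 1/2 else 0)"

end

theory Submission
  imports Defs
begin

text \<open>
  Both tree automata can be run by tossing one fair coin per node: at node u the coin selects
  one of the two successors of the current state; the copying automaton sends it to both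
  children, the switching automaton sends it to the left child and the other successor to the
  right child. Hence both run measures are images of the product measure of independent fair
  coins, and t is accepted iff (coins, branch) pairs are accepting with probability 1.
  Along a fixed branch \<pi>, the switching run on the coins c coincides with the copying run on
  the coins c u xor \<pi> |u|, and xor with a fixed pattern preserves the coin measure.
  By Fubini, the accepting pairs of both automata have the same probability.
\<close>

abbreviation fair_coin :: "bool measure" where
  "fair_coin \<equiv> measure_pmf (pmf_of_set UNIV)"

definition coin_tree :: "(bool list \<Rightarrow> bool) measure" where
  "coin_tree = PiM UNIV (\<lambda>_. fair_coin)"

lemma space_coin_tree [simp]: "space coin_tree = UNIV"
  by (simp add: coin_tree_def space_PiM)

lemma space_coin [simp]: "space coin = UNIV"
  by (simp add: coin_def space_PiM)

lemma space_tree_space [simp]: "space tree_space = UNIV"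
  by (simp add: tree_space_def space_PiM)

lemma prob_space_coin_tree: "prob_space coin_tree"
  unfolding coin_tree_def by (intro prob_space_PiM prob_space_measure_pmf)

lemma prob_space_coin: "prob_space coin"
  unfolding coin_def by (intro prob_space_PiM prob_space_measure_pmf)

lemma emeasure_fair_coin: "emeasure fair_coin X = ennreal (real (card X) / 2)"
  by (subst emeasure_pmf_of_set) auto

lemma measurable_fair_coins_component:
  "(\<lambda>c. c i) \<in> PiM UNIV (\<lambda>_. fair_coin) \<rightarrow>\<^sub>M count_space UNIV"
proof -
  have "(\<lambda>c. c i) \<in> PiM UNIV (\<lambda>_. fair_coin) \<rightarrow>\<^sub>M fair_coin"
    by (rule measurable_component_singleton) simp
  then show ?thesis
    by (simp add: measurable_def)
qed

lemma measurable_tree_space_component: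
  "(\<lambda>\<rho>. \<rho> u) \<in> (tree_space :: (bool list \<Rightarrow> 'q) measure) \<rightarrow>\<^sub>M count_space UNIV"
  unfolding tree_space_def by (rule measurable_component_singleton) simp

lemma emeasure_coin_tree_Collect:
  assumes "finite J"
  shows "emeasure coin_tree {c. \<forall>u\<in>J. c u \<in> F u} = (\<Prod>u\<in>J. ennreal (real (card (F u)) / 2))"
proof -
  interpret product_prob_space "\<lambda>_. fair_coin" "UNIV :: bool list set"
    by unfold_locales
  have "emeasure coin_tree {c \<in> space coin_tree. \<forall>u\<in>J. c u \<in> F u} = (\<Prod>u\<in>J. emeasure fair_coin (F u))"
    unfolding coin_tree_def using assms by (intro emeasure_PiM_Collect) auto
  then show ?thesis
    by (simp add: emeasure_fair_coin)
qed

section \<open>Runs driven by coins\<close>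

lemma all_length_le_Suc_iff:
  "(\<forall>v. length v \<le> Suc n \<longrightarrow> P v) \<longleftrightarrow>
     (\<forall>v. length v \<le> n \<longrightarrow> P v) \<and> (\<forall>u b. length u = n \<longrightarrow> P (u @ [b]))"
proof -
  have "length v \<le> Suc n \<longleftrightarrow> length v \<le> n \<or> (\<exists>u b. length u = n \<and> v = u @ [b])" for v :: "'x list"
    by (cases v rule: rev_exhaust) auto
  then show ?thesis by auto
qed

lemma finite_lists_length_le_UNIV: "finite {u :: 'x::finite list. length u \<le> n}"
  using finite_lists_length_le[of "UNIV :: 'x set" n] by simp

lemma finite_lists_length_less_UNIV: "finite {u :: 'x::finite list. length u < n}"
  by (rule finite_subset[OF _ finite_lists_length_le_UNIV[of n]]) auto

text \<open>A coin step g p a x b is the state given to child b of a node in state p with letter a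
  when that node's coin shows x. The run is computed by recursion on the reversed node address,
  since children are obtained by appending.\<close>

primrec run_of_coins_rev ::
  "('q \<Rightarrow> 'a \<Rightarrow> bool \<Rightarrow> bool \<Rightarrow> 'q) \<Rightarrow> 'q \<Rightarrow> (bool list \<Rightarrow> 'a) \<Rightarrow> (bool list \<Rightarrow> bool) \<Rightarrow> bool list \<Rightarrow> 'q"
where
  "run_of_coins_rev g q0 t c [] = q0"
| "run_of_coins_rev g q0 t c (b # v) =
     g (run_of_coins_rev g q0 t c v) (t (rev v)) (c (rev v)) b"

definition run_of_coins ::
  "('q \<Rightarrow> 'a \<Rightarrow> bool \<Rightarrow> bool \<Rightarrow> 'q) \<Rightarrow> 'q \<Rightarrow> (bool list \<Rightarrow> 'a) \<Rightarrow> (bool list \<Rightarrow> bool) \<Rightarrow> bool list \<Rightarrow> 'q"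
where
  "run_of_coins g q0 t c u = run_of_coins_rev g q0 t c (rev u)"

lemma run_of_coins_Nil [simp]: "run_of_coins g q0 t c [] = q0"
  by (simp add: run_of_coins_def)

lemma run_of_coins_snoc [simp]:
  "run_of_coins g q0 t c (u @ [b]) = g (run_of_coins g q0 t c u) (t u) (c u) b"
  by (simp add: run_of_coins_def)

lemma measurable_run_of_coins_node:
  "(\<lambda>c. run_of_coins g q0 t c u) \<in> coin_tree \<rightarrow>\<^sub>M count_space (UNIV :: 'q::countable set)"
proof (induction u rule: rev_induct)
  case Nil
  then show ?case by simp
next
  case (snoc b u)
  have "(\<lambda>c. (\<lambda>q c. g q (t u) (c u) b) (run_of_coins g q0 t c u) c) \<in> coin_tree \<rightarrow>\<^sub>M count_space UNIV"
  proof (rule measurable_compose_countable[OF _ snoc.IH])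
    fix q :: 'q
    show "(\<lambda>c. g q (t u) (c u) b) \<in> coin_tree \<rightarrow>\<^sub>M count_space UNIV"
      unfolding coin_tree_def by (rule measurable_compose[OF measurable_fair_coins_component]) simp
  qed
  then show ?case by simp
qed

lemma measurable_run_of_coins:
  "run_of_coins g q0 t \<in> coin_tree \<rightarrow>\<^sub>M (tree_space :: (bool list \<Rightarrow> 'q::countable) measure)"
  unfolding tree_space_def
  by (rule measurable_PiM_single') (auto intro: measurable_run_of_coins_node)

definition coin_choices :: "('q \<Rightarrow> 'a \<Rightarrow> bool \<Rightarrow> bool \<Rightarrow> 'q) \<Rightarrow> 'q \<Rightarrow> 'a \<Rightarrow> 'q \<Rightarrow> 'q \<Rightarrow> bool set" where
  "coin_choices g p a q q' = {x. g p a x False = q \<and> g p a x True = q'}"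

text \<open>\<delta> p a q q' is the probability that a fair coin makes g send q and q' to the two children.\<close>

definition fair_coin_sampler ::
  "('q \<Rightarrow> 'a \<Rightarrow> bool \<Rightarrow> bool \<Rightarrow> 'q) \<Rightarrow> ('q \<Rightarrow> 'a \<Rightarrow> 'q \<Rightarrow> 'q \<Rightarrow> real) \<Rightarrow> bool" where
  "fair_coin_sampler g \<delta> \<longleftrightarrow> (\<forall>p a q q'. \<delta> p a q q' = real (card (coin_choices g p a q q')) / 2)"

lemma fair_coin_samplerD:
  "fair_coin_sampler g \<delta> \<Longrightarrow> \<delta> p a q q' = real (card (coin_choices g p a q q')) / 2"
  by (simp add: fair_coin_sampler_def)

lemma run_of_coins_in_cyl_iff:
  "run_of_coins g q0 t c \<in> cyl \<rho> n \<longleftrightarrow>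
     \<rho> [] = q0 \<and> (\<forall>u. length u < n \<longrightarrow>
       c u \<in> coin_choices g (\<rho> u) (t u) (\<rho> (u @ [False])) (\<rho> (u @ [True])))"
proof (induction n)
  case 0
  then show ?case by (auto simp: cyl_def)
next
  case (Suc n)
  have "run_of_coins g q0 t c \<in> cyl \<rho> (Suc n) \<longleftrightarrow> run_of_coins g q0 t c \<in> cyl \<rho> n \<and>
      (\<forall>u b. length u = n \<longrightarrow> run_of_coins g q0 t c (u @ [b]) = \<rho> (u @ [b]))"
    unfolding cyl_def mem_Collect_eq by (rule all_length_le_Suc_iff)
  also have "\<dots> \<longleftrightarrow> run_of_coins g q0 t c \<in> cyl \<rho> n \<and> (\<forall>u. length u = n \<longrightarrow>
      c u \<in> coin_choices g (\<rho> u) (t u) (\<rho> (u @ [False])) (\<rho> (u @ [True])))"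
    by (auto simp: cyl_def coin_choices_def all_bool_eq)
  finally show ?case
    unfolding Suc.IH by (auto simp: less_Suc_eq)
qed

lemma emeasure_run_of_coins_cyl:
  "emeasure coin_tree {c. run_of_coins g q0 t c \<in> cyl \<rho> n} =
     (if \<rho> [] = q0
      then \<Prod>u\<in>{u. length u < n}.
        ennreal (real (card (coin_choices g (\<rho> u) (t u) (\<rho> (u @ [False])) (\<rho> (u @ [True])))) / 2)
      else 0)"
  using emeasure_coin_tree_Collect[OF finite_lists_length_less_UNIV,
      of n "\<lambda>u. coin_choices g (\<rho> u) (t u) (\<rho> (u @ [False])) (\<rho> (u @ [True]))"]
  by (simp add: run_of_coins_in_cyl_iff)

lemma is_run_run_of_coins:
  assumes "fair_coin_sampler g \<delta>"
  shows "is_run \<delta> q0 t (run_of_coins g q0 t c)"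
  unfolding is_run_def
proof (intro conjI allI)
  fix u
  let ?r = "run_of_coins g q0 t c"
  have "c u \<in> coin_choices g (?r u) (t u) (?r (u @ [False])) (?r (u @ [True]))"
    by (simp add: coin_choices_def)
  then have "0 < card (coin_choices g (?r u) (t u) (?r (u @ [False])) (?r (u @ [True])))"
    by (auto simp: card_gt_0_iff)
  then show "0 < \<delta> (?r u) (t u) (?r (u @ [False])) (?r (u @ [True]))"
    by (simp add: fair_coin_samplerD[OF assms])
qed simp

section \<open>Cylinders determine measures on trees\<close>

lemma cyl_in_tree_space: "cyl \<rho> n \<in> sets (tree_space :: (bool list \<Rightarrow> 'q) measure)"
proof -
  have "cyl \<rho> n = (\<Inter>v\<in>{v. length v \<le> n}. (\<lambda>f. f v) -` {\<rho> v} \<inter> space tree_space)"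
    by (auto simp: cyl_def)
  also have "\<dots> \<in> sets (tree_space :: (bool list \<Rightarrow> 'q) measure)"
    using measurable_sets[OF measurable_tree_space_component]
    by (intro sets.finite_INT) (auto intro: exI[of _ "[]"] finite_lists_length_le_UNIV)
  finally show ?thesis .
qed

definition cylinders :: "(bool list \<Rightarrow> 'q) set set" where
  "cylinders = insert {} (range (\<lambda>(\<rho>, n). cyl \<rho> n))"

lemma node_event_in_sigma_cylinders:
  "{f :: bool list \<Rightarrow> 'q::countable. f u \<in> A} \<in> sigma_sets UNIV cylinders"
proof -
  define D where "D = {v :: bool list. length v \<le> length u}"
  define R where "R = {g \<in> PiE D (\<lambda>_. UNIV :: 'q set). g u \<in> A}"
  have "countable R"
    using countable_PiE[of D "\<lambda>_. UNIV :: 'q set"] finite_lists_length_le_UNIV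
    by (auto simp: D_def R_def intro: countable_subset[rotated])
  then have "(\<Union>g\<in>R. cyl g (length u)) \<in> sigma_sets UNIV cylinders"
    by (intro sigma_algebra.countable_Union[OF sigma_algebra_sigma_sets])
      (auto simp: cylinders_def intro!: sigma_sets.Basic)
  moreover have "{f :: bool list \<Rightarrow> 'q. f u \<in> A} = (\<Union>g\<in>R. cyl g (length u))"
  proof safe
    fix f :: "bool list \<Rightarrow> 'q"
    assume "f u \<in> A"
    then have "restrict f D \<in> R" "f \<in> cyl (restrict f D) (length u)"
      by (auto simp: R_def D_def cyl_def)
    then show "f \<in> (\<Union>g\<in>R. cyl g (length u))" by blast
  qed (auto simp: R_def cyl_def)
  ultimately show ?thesis by simp
qed

lemma sets_tree_space_cylinders:
  "sets (tree_space :: (bool list \<Rightarrow> 'q::countable) measure) = sigma_sets UNIV cylinders"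
proof -
  have "sets (tree_space :: (bool list \<Rightarrow> 'q) measure) = sigma_sets UNIV {{f. f u \<in> A} | u A. True}"
    unfolding tree_space_def by (subst sets_PiM_single) simp
  also have "\<dots> = sigma_sets UNIV cylinders"
  proof (rule sigma_sets_eqI)
    fix b :: "(bool list \<Rightarrow> 'q) set"
    assume "b \<in> cylinders"
    then have "b \<in> sets (tree_space :: (bool list \<Rightarrow> 'q) measure)"
      by (auto simp: cylinders_def cyl_in_tree_space)
    then show "b \<in> sigma_sets UNIV {{f. f u \<in> A} | u A. True}"
      unfolding tree_space_def by (subst (asm) sets_PiM_single) simp
  qed (auto intro: node_event_in_sigma_cylinders)
  finally show ?thesis .
qed

lemma cyl_Int_cyl:
  assumes "n \<le> m"
  shows "cyl \<rho> n \<inter> cyl \<sigma> m = (if \<forall>v. length v \<le> n \<longrightarrow> \<rho> v = \<sigma> v then cyl \<sigma> m else {})"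
  using assms by (auto simp: cyl_def)

lemma Int_stable_cylinders: "Int_stable cylinders"
proof (rule Int_stableI)
  fix a b :: "(bool list \<Rightarrow> 'q) set"
  assume "a \<in> cylinders" "b \<in> cylinders"
  then consider "a = {} \<or> b = {}" | \<rho> n \<sigma> m where "a = cyl \<rho> n" "b = cyl \<sigma> m"
    by (auto simp: cylinders_def)
  then show "a \<inter> b \<in> cylinders"
  proof cases
    case 2
    then show ?thesis
      using cyl_Int_cyl[of n m \<rho> \<sigma>] cyl_Int_cyl[of m n \<sigma> \<rho>]
      by (cases "n \<le> m") (auto simp: cylinders_def Int_commute)
  qed (auto simp: cylinders_def)
qed

lemma tree_space_measure_eqI:
  fixes M N :: "(bool list \<Rightarrow> 'q::countable) measure"
  assumes "sets M = sets tree_space" "sets N = sets tree_space" "finite_measure M"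
    and "\<And>\<rho> n. emeasure M (cyl \<rho> n) = emeasure N (cyl \<rho> n)"
  shows "M = N"
proof (rule measure_eqI_generator_eq_countable[of cylinders UNIV _ _ "range (\<lambda>q. cyl (\<lambda>_. q) 0)"])
  show "sets M = sigma_sets UNIV cylinders" "sets N = sigma_sets UNIV cylinders"
    using assms(1,2) by (simp_all add: sets_tree_space_cylinders)
  show "\<Union> (range (\<lambda>q::'q. cyl (\<lambda>_. q) 0)) = UNIV"
    by (auto simp: cyl_def)
  show "Int_stable cylinders"
    by (rule Int_stable_cylinders)
qed (use assms(3,4) in \<open>auto simp: cylinders_def finite_measure.emeasure_finite\<close>)

section \<open>The run measure as an image of the coin tree\<close>

lemma run_measure_eq_distr:
  fixes \<delta> :: "'q::finite \<Rightarrow> 'a \<Rightarrow> 'q \<Rightarrow> 'q \<Rightarrow> real"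
  assumes "fair_coin_sampler g \<delta>"
  shows "run_measure \<delta> q0 t = distr coin_tree tree_space (run_of_coins g q0 t)"
proof -
  define P where "P M \<longleftrightarrow> prob_space M \<and> sets M = sets tree_space \<and>
     (\<forall>\<rho> n. emeasure M (cyl \<rho> n) =
        (if \<rho> [] = q0
         then ennreal (\<Prod>u\<in>{u. length u < n}. \<delta> (\<rho> u) (t u) (\<rho> (u @ [False])) (\<rho> (u @ [True])))
         else 0))" for M :: "(bool list \<Rightarrow> 'q) measure"
  let ?D = "distr coin_tree tree_space (run_of_coins g q0 t)"
  txt \<open>run_measure is a description; ?D meets its specification, which has only one solution.\<close>
  have "P ?D"
    unfolding P_def
  proof (intro conjI allI)
    show "prob_space ?D"
      by (rule prob_space.prob_space_distr[OF prob_space_coin_tree measurable_run_of_coins])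
    fix \<rho> :: "bool list \<Rightarrow> 'q" and n
    have "emeasure ?D (cyl \<rho> n) = emeasure coin_tree {c. run_of_coins g q0 t c \<in> cyl \<rho> n}"
      by (simp add: emeasure_distr[OF measurable_run_of_coins cyl_in_tree_space] vimage_def)
    then show "emeasure ?D (cyl \<rho> n) = (if \<rho> [] = q0
         then ennreal (\<Prod>u\<in>{u. length u < n}. \<delta> (\<rho> u) (t u) (\<rho> (u @ [False])) (\<rho> (u @ [True])))
         else 0)"
      by (simp add: emeasure_run_of_coins_cyl fair_coin_samplerD[OF assms] prod_ennreal)
  qed simp
  then have "P (run_measure \<delta> q0 t)"
    unfolding run_measure_def P_def[symmetric] by (rule someI)
  with \<open>P ?D\<close> show ?thesis
    by (intro tree_space_measure_eqI) (auto simp: P_def prob_space_def)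
qed

lemma binary_branching_word_support:
  fixes \<delta> :: "'q::finite \<Rightarrow> 'a \<Rightarrow> 'q \<Rightarrow> real"
  assumes "binary_branching_word \<delta>"
  shows "\<exists>x y. x \<noteq> y \<and> {z. \<delta> p a z = 1/2} = {x, y}"
proof -
  let ?H = "{z. \<delta> p a z = 1/2}"
  have "1 = (\<Sum>z\<in>UNIV. \<delta> p a z)"
    using assms by (simp add: binary_branching_word_def)
  also have "\<dots> = (\<Sum>z\<in>UNIV. if z \<in> ?H then 1/2 else 0)"
    using assms by (intro sum.cong) (auto simp: binary_branching_word_def)
  also have "\<dots> = real (card ?H) / 2"
    by (simp add: sum.If_cases)
  finally have "card ?H = 2" by simp
  then show ?thesis by (auto simp: card_2_iff)
qed

definition word_succ :: "('q \<Rightarrow> 'a \<Rightarrow> 'q \<Rightarrow> real) \<Rightarrow> 'q \<Rightarrow> 'a \<Rightarrow> bool \<Rightarrow> 'q" where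
  "word_succ \<delta> p a =
     (SOME s. s True \<noteq> s False \<and> {z. \<delta> p a z = 1/2} = {s True, s False})"

lemma word_succ:
  fixes \<delta> :: "'q::finite \<Rightarrow> 'a \<Rightarrow> 'q \<Rightarrow> real"
  assumes "binary_branching_word \<delta>"
  shows "word_succ \<delta> p a x = word_succ \<delta> p a y \<longleftrightarrow> x = y"
    and "\<delta> p a z = (if z = word_succ \<delta> p a True \<or> z = word_succ \<delta> p a False then 1/2 else 0)"
proof -
  obtain q1 q2 where "q1 \<noteq> q2" "{z. \<delta> p a z = 1/2} = {q1, q2}"
    using binary_branching_word_support[OF assms] by blast
  then have "\<exists>s. s True \<noteq> s False \<and> {z. \<delta> p a z = 1/2} = {s True, s False}"
    by (intro exI[of _ "\<lambda>b. if b then q1 else q2"]) auto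
  then have s: "word_succ \<delta> p a True \<noteq> word_succ \<delta> p a False \<and>
      {z. \<delta> p a z = 1/2} = {word_succ \<delta> p a True, word_succ \<delta> p a False}"
    unfolding word_succ_def by (rule someI_ex)
  then show "word_succ \<delta> p a x = word_succ \<delta> p a y \<longleftrightarrow> x = y"
    by (cases x; cases y) auto
  have "\<delta> p a z \<in> {0, 1/2}"
    using assms by (simp add: binary_branching_word_def)
  with s show "\<delta> p a z = (if z = word_succ \<delta> p a True \<or> z = word_succ \<delta> p a False then 1/2 else 0)"
    by (auto simp: set_eq_iff)
qed

definition copy_step :: "('q \<Rightarrow> 'a \<Rightarrow> 'q \<Rightarrow> real) \<Rightarrow> 'q \<Rightarrow> 'a \<Rightarrow> bool \<Rightarrow> bool \<Rightarrow> 'q" where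
  "copy_step \<delta> p a x b = word_succ \<delta> p a x"

definition switch_step :: "('q \<Rightarrow> 'a \<Rightarrow> 'q \<Rightarrow> real) \<Rightarrow> 'q \<Rightarrow> 'a \<Rightarrow> bool \<Rightarrow> bool \<Rightarrow> 'q" where
  "switch_step \<delta> p a x b = word_succ \<delta> p a (x \<noteq> b)"

lemma card_bool_Collect: "card {x::bool. P x} = of_bool (P True) + of_bool (P False)"
proof -
  have "{x. P x} = (if P True then {True} else {}) \<union> (if P False then {False} else {})"
    by (auto simp: all_bool_eq) (metis (full_types))
  then show ?thesis by simp
qed

lemma fair_coin_sampler_copy_step:
  fixes \<delta> :: "'q::finite \<Rightarrow> 'a \<Rightarrow> 'q \<Rightarrow> real"
  assumes "binary_branching_word \<delta>"
  shows "fair_coin_sampler (copy_step \<delta>) (delta1 \<delta>)"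
  unfolding fair_coin_sampler_def
proof (intro allI)
  fix p a q q'
  have "word_succ \<delta> p a True \<noteq> word_succ \<delta> p a False" "word_succ \<delta> p a False \<noteq> word_succ \<delta> p a True"
    by (simp_all add: word_succ(1)[OF assms])
  then show "delta1 \<delta> p a q q' = real (card (coin_choices (copy_step \<delta>) p a q q')) / 2"
    by (auto simp: word_succ(2)[OF assms] coin_choices_def copy_step_def delta1_def card_bool_Collect)
qed

lemma fair_coin_sampler_switch_step:
  fixes \<delta> :: "'q::finite \<Rightarrow> 'a \<Rightarrow> 'q \<Rightarrow> real"
  assumes "binary_branching_word \<delta>"
  shows "fair_coin_sampler (switch_step \<delta>) (delta2 \<delta>)"
  unfolding fair_coin_sampler_def
proof (intro allI)
  fix p a q q'
  have "word_succ \<delta> p a True \<noteq> word_succ \<delta> p a False" "word_succ \<delta> p a False \<noteq> word_succ \<delta> p a True"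
    by (simp_all add: word_succ(1)[OF assms])
  then show "delta2 \<delta> p a q q' = real (card (coin_choices (switch_step \<delta>) p a q q')) / 2"
    by (auto simp: word_succ(2)[OF assms] coin_choices_def switch_step_def delta2_def card_bool_Collect)
qed

lemma measurable_coin_prefix: "(\<lambda>\<pi>. map \<pi> [0..<n]) \<in> coin \<rightarrow>\<^sub>M count_space UNIV"
proof (induction n)
  case (Suc n)
  have "(\<lambda>\<pi>. (\<lambda>l \<pi>. l @ [\<pi> n]) (map \<pi> [0..<n]) \<pi>) \<in> coin \<rightarrow>\<^sub>M count_space UNIV"
  proof (rule measurable_compose_countable[OF _ Suc.IH])
    fix l :: "bool list"
    show "(\<lambda>\<pi>. l @ [\<pi> n]) \<in> coin \<rightarrow>\<^sub>M count_space UNIV"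
      unfolding coin_def by (rule measurable_compose[OF measurable_fair_coins_component]) simp
  qed
  then show ?case by simp
qed simp

lemma pred_parity_acc:
  fixes r :: "'x \<Rightarrow> nat \<Rightarrow> 'q::finite"
  assumes "\<And>n. (\<lambda>x. r x n) \<in> M \<rightarrow>\<^sub>M count_space UNIV"
  shows "Measurable.pred M (\<lambda>x. parity_acc \<alpha> (r x))"
proof -
  have eq: "parity_acc \<alpha> (r x) \<longleftrightarrow> (\<exists>S. S = {q. \<forall>m. \<exists>n\<ge>m. r x n = q} \<and> even (Min (\<alpha> ` S)))" for x
    unfolding parity_acc_def INFM_nat_le by (simp add: setcompr_eq_image)
  show ?thesis
    unfolding eq set_eq_iff mem_Collect_eq
    by (intro pred_intros_countable pred_intros_logic pred_count_space_const1 assms measurable_const)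
      simp_all
qed

lemma pred_parity_acc_along:
  fixes R :: "'x \<Rightarrow> bool list \<Rightarrow> 'q::finite"
  assumes "\<And>u. (\<lambda>x. R x u) \<in> N \<rightarrow>\<^sub>M count_space UNIV"
  shows "Measurable.pred (N \<Otimes>\<^sub>M coin) (\<lambda>z. parity_acc \<alpha> (along (R (fst z)) (snd z)))"
proof (rule pred_parity_acc)
  fix n
  have "(\<lambda>z. (\<lambda>l z. R (fst z) l) (map (snd z) [0..<n]) z) \<in> N \<Otimes>\<^sub>M coin \<rightarrow>\<^sub>M count_space UNIV"
    by (rule measurable_compose_countable[OF _ measurable_compose[OF measurable_snd measurable_coin_prefix]])
      (rule measurable_compose[OF measurable_fst assms])
  then show "(\<lambda>z. along (R (fst z)) (snd z) n) \<in> N \<Otimes>\<^sub>M coin \<rightarrow>\<^sub>M count_space UNIV"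
    by (simp add: along_def)
qed

lemma accepting_runs_in_tree_space:
  fixes \<delta> :: "'q::finite \<Rightarrow> 'a \<Rightarrow> 'q \<Rightarrow> 'q \<Rightarrow> real"
  shows "{\<rho>. is_run \<delta> q0 t \<rho> \<and> qual_accepting \<alpha> \<rho>} \<in> sets tree_space"
proof -
  interpret coin: prob_space coin
    by (rule prob_space_coin)
  define X :: "((bool list \<Rightarrow> 'q) \<times> (nat \<Rightarrow> bool)) set" where
    "X = {z. parity_acc \<alpha> (along (fst z) (snd z))}"
  have "X \<in> sets (tree_space \<Otimes>\<^sub>M coin)"
    using pred_parity_acc_along[of "\<lambda>\<rho>. \<rho>", OF measurable_tree_space_component]
    by (simp add: X_def pred_def space_pair_measure)
  then have "Measurable.pred tree_space (\<lambda>\<rho>. emeasure coin (Pair \<rho> -` X) = 1)"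
    by (intro pred_eq_const1[OF coin.measurable_emeasure_Pair] borel_singleton) simp_all
  moreover have "qual_accepting \<alpha> \<rho> \<longleftrightarrow> emeasure coin (Pair \<rho> -` X) = 1" for \<rho>
    by (simp add: qual_accepting_def X_def vimage_def)
  moreover have "is_run \<delta> q0 t \<rho> \<longleftrightarrow> \<rho> [] = q0 \<and> (\<forall>u. \<exists>q q0' q1'. \<rho> u = q \<and>
      \<rho> (u @ [False]) = q0' \<and> \<rho> (u @ [True]) = q1' \<and> 0 < \<delta> q (t u) q0' q1')" for \<rho>
    by (auto simp: is_run_def)
  moreover have "Measurable.pred tree_space (\<lambda>\<rho>. \<rho> u = q)" for u and q :: 'q
    by (rule pred_count_space_const1[OF measurable_tree_space_component])
  ultimately have "Measurable.pred tree_space (\<lambda>\<rho>. is_run \<delta> q0 t \<rho> \<and> qual_accepting \<alpha> \<rho>)"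
    by (simp only:) (intro pred_intros_countable pred_intros_logic measurable_const; simp)
  then show ?thesis
    by (simp add: pred_def)
qed

definition accepting_pairs ::
  "('q::finite \<Rightarrow> 'a \<Rightarrow> bool \<Rightarrow> bool \<Rightarrow> 'q) \<Rightarrow> 'q \<Rightarrow> (bool list \<Rightarrow> 'a) \<Rightarrow> ('q \<Rightarrow> nat) \<Rightarrow>
     ((bool list \<Rightarrow> bool) \<times> (nat \<Rightarrow> bool)) set"
where
  "accepting_pairs g q0 t \<alpha> = {(c, \<pi>). parity_acc \<alpha> (along (run_of_coins g q0 t c) \<pi>)}"

lemma accepting_pairs_in_sets: "accepting_pairs g q0 t \<alpha> \<in> sets (coin_tree \<Otimes>\<^sub>M coin)"
  using pred_parity_acc_along[of "run_of_coins g q0 t", OF measurable_run_of_coins_node]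
  by (simp add: accepting_pairs_def pred_def space_pair_measure case_prod_beta')

lemma (in prob_space) emeasure_eq_1_iff_nn_integral_eq_1:
  assumes "f \<in> borel_measurable M" "\<And>x. x \<in> space M \<Longrightarrow> f x \<le> 1"
  shows "emeasure M {x \<in> space M. f x = 1} = 1 \<longleftrightarrow> (\<integral>\<^sup>+x. f x \<partial>M) = 1"
proof -
  have "Measurable.pred M (\<lambda>x. f x = 1)"
    by (intro pred_eq_const1[OF assms(1)] borel_singleton) simp
  then have ae: "emeasure M {x \<in> space M. f x = 1} = 1 \<longleftrightarrow> (AE x in M. f x = 1)"
    by (rule AE_iff_emeasure_eq_1[symmetric])
  show ?thesis
    unfolding ae
  proof
    assume "AE x in M. f x = 1"
    then have "(\<integral>\<^sup>+x. f x \<partial>M) = (\<integral>\<^sup>+x. 1 \<partial>M)"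
      by (rule nn_integral_cong_AE)
    then show "(\<integral>\<^sup>+x. f x \<partial>M) = 1"
      by (simp add: emeasure_space_1)
  next
    assume f: "(\<integral>\<^sup>+x. f x \<partial>M) = 1"
    have "(\<integral>\<^sup>+x. 1 - f x \<partial>M) = (\<integral>\<^sup>+x. 1 \<partial>M) - (\<integral>\<^sup>+x. f x \<partial>M)"
      using assms f by (intro nn_integral_diff) auto
    then have "(\<integral>\<^sup>+x. 1 - f x \<partial>M) = 0"
      using f by (simp add: emeasure_space_1)
    then have "AE x in M. 1 - f x = 0"
      using assms(1) by (simp add: nn_integral_0_iff_AE)
    then show "AE x in M. f x = 1"
    proof (rule AE_mp, intro AE_I2 impI)
      fix x
      assume "x \<in> space M" "1 - f x = 0"
      with assms(2) show "f x = 1"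
        by (blast intro: antisym ennreal_minus_eq_0)
    qed
  qed
qed

lemma lang_qual_iff_accepting_pairs:
  fixes \<delta> :: "'q::finite \<Rightarrow> 'a \<Rightarrow> 'q \<Rightarrow> 'q \<Rightarrow> real"
  assumes "fair_coin_sampler g \<delta>"
  shows "t \<in> lang_qual \<delta> q0 \<alpha> \<longleftrightarrow> emeasure (coin_tree \<Otimes>\<^sub>M coin) (accepting_pairs g q0 t \<alpha>) = 1"
proof -
  interpret coin: prob_space coin
    by (rule prob_space_coin)
  interpret coin_tree: prob_space coin_tree
    by (rule prob_space_coin_tree)
  define f where "f c = emeasure coin (Pair c -` accepting_pairs g q0 t \<alpha>)" for c
  have f: "f \<in> borel_measurable coin_tree"
    unfolding f_def by (rule coin.measurable_emeasure_Pair[OF accepting_pairs_in_sets])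
  have "run_of_coins g q0 t -` {\<rho>. is_run \<delta> q0 t \<rho> \<and> qual_accepting \<alpha> \<rho>} = {c. f c = 1}"
    using is_run_run_of_coins[OF assms] by (auto simp: qual_accepting_def f_def accepting_pairs_def)
  then have "t \<in> lang_qual \<delta> q0 \<alpha> \<longleftrightarrow> emeasure coin_tree {c \<in> space coin_tree. f c = 1} = 1"
    by (simp add: lang_qual_def run_measure_eq_distr[OF assms]
        emeasure_distr[OF measurable_run_of_coins accepting_runs_in_tree_space])
  also have "\<dots> \<longleftrightarrow> (\<integral>\<^sup>+c. f c \<partial>coin_tree) = 1"
    using f by (rule coin_tree.emeasure_eq_1_iff_nn_integral_eq_1) (simp add: f_def coin.emeasure_le_1)
  also have "(\<integral>\<^sup>+c. f c \<partial>coin_tree) = emeasure (coin_tree \<Otimes>\<^sub>M coin) (accepting_pairs g q0 t \<alpha>)"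
    unfolding f_def by (rule coin.emeasure_pair_measure_alt[OF accepting_pairs_in_sets, symmetric])
  finally show ?thesis .
qed

section \<open>Copying versus switching\<close>

lemma card_vimage_xor_bool: "card ((\<lambda>b::bool. b \<noteq> x) -` F) = card F"
  by (rule card_vimage_inj) (auto simp: inj_def image_iff)

definition xor_coins :: "(bool list \<Rightarrow> bool) \<Rightarrow> (bool list \<Rightarrow> bool) \<Rightarrow> bool list \<Rightarrow> bool" where
  "xor_coins h c = (\<lambda>u. c u \<noteq> h u)"

lemma measurable_xor_coins: "xor_coins h \<in> coin_tree \<rightarrow>\<^sub>M coin_tree"
  unfolding coin_tree_def xor_coins_def
proof (rule measurable_PiM_single')
  fix u :: "bool list"
  have "(\<lambda>c. c u \<noteq> h u) \<in> PiM UNIV (\<lambda>_. fair_coin) \<rightarrow>\<^sub>M count_space UNIV"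
    by (rule measurable_compose[OF measurable_fair_coins_component]) simp
  then show "(\<lambda>c. c u \<noteq> h u) \<in> PiM UNIV (\<lambda>_. fair_coin) \<rightarrow>\<^sub>M fair_coin"
    by (simp add: measurable_def)
qed (simp add: space_PiM)

text \<open>Xor with a fixed pattern h is a bijection on each coordinate, so it preserves every
  finite-dimensional marginal of the coin tree.\<close>

lemma distr_xor_coins: "distr coin_tree coin_tree (xor_coins h) = coin_tree"
proof -
  interpret product_prob_space "\<lambda>_. fair_coin" "UNIV :: bool list set"
    by unfold_locales
  have "distr coin_tree coin_tree (xor_coins h) = PiM UNIV (\<lambda>_. fair_coin)"
  proof (rule PiM_eq)
    fix J :: "bool list set" and F :: "bool list \<Rightarrow> bool set"
    assume J: "finite J"
    have emb: "prod_emb UNIV (\<lambda>_. fair_coin) J (Pi\<^sub>E J F) = {c. \<forall>u\<in>J. c u \<in> F u}"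
      by (auto simp: prod_emb_def PiE_iff)
    have "{c. \<forall>u\<in>J. c u \<in> F u} \<in> sets coin_tree"
      unfolding emb[symmetric] coin_tree_def using J by (intro sets_PiM_I) auto
    then have "emeasure (distr coin_tree coin_tree (xor_coins h)) {c. \<forall>u\<in>J. c u \<in> F u}
        = emeasure coin_tree {c. \<forall>u\<in>J. c u \<in> (\<lambda>b. b \<noteq> h u) -` F u}"
      by (simp add: emeasure_distr[OF measurable_xor_coins] vimage_def xor_coins_def)
    also have "\<dots> = (\<Prod>u\<in>J. ennreal (real (card ((\<lambda>b. b \<noteq> h u) -` F u)) / 2))"
      using J by (rule emeasure_coin_tree_Collect)
    also have "\<dots> = (\<Prod>u\<in>J. emeasure fair_coin (F u))"
      by (simp only: card_vimage_xor_bool emeasure_fair_coin)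
    finally show "emeasure (distr coin_tree coin_tree (xor_coins h)) (prod_emb UNIV (\<lambda>_. fair_coin) J (Pi\<^sub>E J F))
        = (\<Prod>u\<in>J. emeasure fair_coin (F u))"
      by (simp only: emb)
  qed (simp add: coin_tree_def)
  then show ?thesis
    by (simp add: coin_tree_def)
qed

lemma along_switch_xor_coins:
  "along (run_of_coins (switch_step \<delta>) q0 t (xor_coins (\<lambda>u. \<pi> (length u)) c)) \<pi> =
     along (run_of_coins (copy_step \<delta>) q0 t c) \<pi>"
proof
  have xor_xor: "((x = (\<not> y)) = (\<not> y)) = x" for x y :: bool
    by blast
  fix n
  show "along (run_of_coins (switch_step \<delta>) q0 t (xor_coins (\<lambda>u. \<pi> (length u)) c)) \<pi> n =
      along (run_of_coins (copy_step \<delta>) q0 t c) \<pi> n"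
    unfolding along_def
    by (induction n) (simp_all add: switch_step_def copy_step_def xor_coins_def xor_xor)
qed

lemma emeasure_accepting_pairs_switch_eq_copy:
  "emeasure (coin_tree \<Otimes>\<^sub>M coin) (accepting_pairs (switch_step \<delta>) q0 t \<alpha>) =
     emeasure (coin_tree \<Otimes>\<^sub>M coin) (accepting_pairs (copy_step \<delta>) q0 t \<alpha>)"
proof -
  interpret pair_prob_space coin_tree coin
    by (simp add: pair_prob_space_def pair_sigma_finite_def prob_space_coin_tree prob_space_coin
        prob_space_imp_sigma_finite)
  have "emeasure coin_tree ((\<lambda>c. (c, \<pi>)) -` accepting_pairs (switch_step \<delta>) q0 t \<alpha>) =
      emeasure coin_tree ((\<lambda>c. (c, \<pi>)) -` accepting_pairs (copy_step \<delta>) q0 t \<alpha>)" for \<pi>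
  proof -
    let ?slice = "\<lambda>g. (\<lambda>c. (c, \<pi>)) -` accepting_pairs g q0 t \<alpha>"
    have "(\<lambda>c. (c, \<pi>)) \<in> coin_tree \<rightarrow>\<^sub>M coin_tree \<Otimes>\<^sub>M coin"
      by measurable
    from measurable_sets[OF this accepting_pairs_in_sets]
    have "?slice (switch_step \<delta>) \<in> sets coin_tree"
      by simp
    moreover have "?slice (copy_step \<delta>) = xor_coins (\<lambda>u. \<pi> (length u)) -` ?slice (switch_step \<delta>)"
      by (auto simp: accepting_pairs_def along_switch_xor_coins)
    ultimately have "emeasure coin_tree (?slice (copy_step \<delta>)) =
        emeasure (distr coin_tree coin_tree (xor_coins (\<lambda>u. \<pi> (length u)))) (?slice (switch_step \<delta>))"
      by (simp add: emeasure_distr[OF measurable_xor_coins])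
    then show ?thesis
      by (simp add: distr_xor_coins)
  qed
  then show ?thesis
    by (simp add: emeasure_pair_measure_alt2[OF accepting_pairs_in_sets])
qed

theorem lemma3p10:
  fixes \<delta> :: "'q::finite \<Rightarrow> 'a::finite \<Rightarrow> 'q \<Rightarrow> real"
    and q\<iota> :: 'q and \<alpha> :: "'q \<Rightarrow> nat"
  assumes "binary_branching_word \<delta>"
  shows "lang_qual (delta1 \<delta>) q\<iota> \<alpha> = lang_qual (delta2 \<delta>) q\<iota> \<alpha>"
proof (rule set_eqI)
  fix t
  show "t \<in> lang_qual (delta1 \<delta>) q\<iota> \<alpha> \<longleftrightarrow> t \<in> lang_qual (delta2 \<delta>) q\<iota> \<alpha>"
    unfolding lang_qual_iff_accepting_pairs[OF fair_coin_sampler_copy_step[OF assms]]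
      lang_qual_iff_accepting_pairs[OF fair_coin_sampler_switch_step[OF assms]]
      emeasure_accepting_pairs_switch_eq_copy ..
qed

end
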